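(* For every normalized Hausdorff moment sequence $\mathbf a=(a_n)_{n\ge0}$ we have $\lim_{n\to\infty}T^{\circ n}(\mathbf a)=\mathbf m$ coordinatewise, i.e. $\lim_{n\to\infty}(T^{\circ n}(\mathbf a))_k=m_k$ for every $k\ge0$. Equivalently, for every probability measure $\tau$ on $[0,1]$, $\widehat T^{\circ n}(\tau)\to\mu$ weakly.
   Context: Let $\mathbf m=(m_n)_{n\ge0}$ be the unique sequence of positive reals with $m_0=1$ and $(1+m_1+\cdots+m_n)\,m_n=1$ for $n\ge1$; it is a Hausdorff moment sequence with representing probability measure $\mu$ on $[0,1]$. A normalized Hausdorff moment sequence is $\mathbf a=(a_n)_n$ with $a_n=\int_0^1t^n\,d\nu(t)$ for a probability measure $\nu$ on $[0,1]$. The map $T$ is $T(\mathbf a)_n=1/(a_0+a_1+\cdots+a_n)$, $n\ge0$; it maps normalized Hausdorff moment sequences to normalized Hausdorff moment sequences, and $\widehat T$ denotes the induced map on probability measures on $[0,1]$. $T^{\circ n}$ is the $n$-fold iterate. *)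

theory Defs
  imports "HOL-Probability.Probability"
begin

definition normalized_hausdorff_moment_seq :: "(nat \<Rightarrow> real) \<Rightarrow> bool" where
  "normalized_hausdorff_moment_seq a \<longleftrightarrow>
     (\<exists>\<nu> :: real measure. prob_space \<nu> \<and> sets \<nu> = sets borel \<and>
        measure \<nu> {0..1} = 1 \<and>
        (\<forall>n. a n = (\<integral>t. t ^ n \<partial>\<nu>)))"

definition T_map :: "(nat \<Rightarrow> real) \<Rightarrow> (nat \<Rightarrow> real)" where
  "T_map a = (\<lambda>n. 1 / (\<Sum>k\<le>n. a k))"

definition mseq :: "nat \<Rightarrow> real" where
  "mseq = (THE m. m 0 = 1 \<and> (\<forall>n. 0 < m n) \<and>
                  (\<forall>n\<ge>1. (1 + (\<Sum>k=1..n. m k)) * m n = 1))"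

end

theory Submission
  imports Defs
begin

text \<open>Only \<open>a\<^sub>0 = 1\<close> and \<open>a\<^sub>j \<ge> 0\<close> matter, and \<open>T\<close> preserves both. With
  \<open>quad_root S\<close> the positive root of \<open>x (S + x) = 1\<close>, the defining relation of \<open>m\<close> reads
  \<open>m\<^sub>k = quad_root (m\<^sub>0 + \<dots> + m\<^sub>k\<^sub>-\<^sub>1)\<close>. By induction on \<open>k\<close>, the sum \<open>s\<^sub>n\<close> of the
  coordinates below \<open>k\<close> of the \<open>n\<close>-th iterate tends to \<open>S = m\<^sub>0 + \<dots> + m\<^sub>k\<^sub>-\<^sub>1\<close>, while the
  \<open>k\<close>-th coordinate obeys \<open>x\<^sub>n\<^sub>+\<^sub>1 = 1 / (s\<^sub>n + x\<^sub>n)\<close>. Since \<open>s\<^sub>n \<ge> 1\<close>, this is a contraction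
  towards \<open>m\<^sub>k\<close> with factor \<open>m\<^sub>k < 1\<close>, perturbed by an error \<open>m\<^sub>k \<bar>s\<^sub>n - S\<bar> \<rightarrow> 0\<close>.\<close>

lemma LIMSEQ_zero_perturbed_contraction:
  fixes e d :: "nat \<Rightarrow> real"
  assumes e_nonneg: "\<And>n. 0 \<le> e n" and "0 \<le> q" "q < 1"
    and step: "\<And>n. e (Suc n) \<le> q * e n + d n" and "d \<longlonglongrightarrow> 0"
  shows "e \<longlonglongrightarrow> 0"
proof (rule LIMSEQ_I)
  fix r :: real assume "0 < r"
  define \<epsilon> where "\<epsilon> = r / 2"
  have "0 < \<epsilon>" using \<open>0 < r\<close> by (simp add: \<epsilon>_def)
  then obtain N where N: "\<And>n. n \<ge> N \<Longrightarrow> \<bar>d n\<bar> < \<epsilon> * (1 - q)"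
    using LIMSEQ_D[OF \<open>d \<longlonglongrightarrow> 0\<close>, of "\<epsilon> * (1 - q)"] \<open>q < 1\<close> by auto
  have bound: "e (N + i) \<le> q ^ i * e N + \<epsilon>" for i
  proof (induction i)
    case 0
    show ?case using \<open>0 < \<epsilon>\<close> by simp
  next
    case (Suc i)
    have "e (N + Suc i) \<le> q * e (N + i) + d (N + i)"
      using step[of "N + i"] by simp
    also have "\<dots> \<le> q * (q ^ i * e N + \<epsilon>) + \<epsilon> * (1 - q)"
      using mult_left_mono[OF Suc \<open>0 \<le> q\<close>] N[of "N + i"] by auto
    also have "\<dots> = q ^ Suc i * e N + \<epsilon>"
      by (simp add: algebra_simps)
    finally show ?case .
  qed
  have "(\<lambda>i. q ^ i * e N) \<longlonglongrightarrow> 0"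
    using LIMSEQ_power_zero[of q] \<open>0 \<le> q\<close> \<open>q < 1\<close> by (auto intro: tendsto_mult_left_zero)
  from LIMSEQ_D[OF this \<open>0 < \<epsilon>\<close>]
  obtain M where M: "\<And>i. i \<ge> M \<Longrightarrow> \<bar>q ^ i * e N\<bar> < \<epsilon>"
    by auto
  have "\<bar>e n\<bar> < r" if "n \<ge> N + M" for n
  proof -
    have "e n \<le> q ^ (n - N) * e N + \<epsilon>"
      using bound[of "n - N"] that by simp
    moreover have "\<bar>q ^ (n - N) * e N\<bar> < \<epsilon>"
      using M[of "n - N"] that by simp
    ultimately show ?thesis
      using e_nonneg[of n] by (simp add: \<epsilon>_def)
  qed
  then show "\<exists>N. \<forall>n\<ge>N. norm (e n - 0) < r"
    by auto
qed

fun partial_sum_rec :: "('a::comm_monoid_add \<Rightarrow> 'a) \<Rightarrow> nat \<Rightarrow> 'a" where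
  "partial_sum_rec g 0 = 0"
| "partial_sum_rec g (Suc n) = partial_sum_rec g n + g (partial_sum_rec g n)"

lemma partial_sum_rec_eq_sum:
  "partial_sum_rec g n = (\<Sum>k<n. g (partial_sum_rec g k))"
  by (induction n) simp_all

lemma ex1_partial_sum_recursion:
  fixes g :: "'a::comm_monoid_add \<Rightarrow> 'a"
  shows "\<exists>!f :: nat \<Rightarrow> 'a. \<forall>n. f n = g (\<Sum>k<n. f k)"
proof (rule ex1I)
  show "\<forall>n. g (partial_sum_rec g n) = g (\<Sum>k<n. g (partial_sum_rec g k))"
    using partial_sum_rec_eq_sum by metis
next
  fix f :: "nat \<Rightarrow> 'a" assume f: "\<forall>n. f n = g (\<Sum>k<n. f k)"
  show "f = (\<lambda>n. g (partial_sum_rec g n))"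
  proof
    fix n show "f n = g (partial_sum_rec g n)"
    proof (induction n rule: less_induct)
      case (less n)
      have "(\<Sum>k<n. f k) = (\<Sum>k<n. g (partial_sum_rec g k))"
        using less by (intro sum.cong) auto
      also have "\<dots> = partial_sum_rec g n"
        by (rule partial_sum_rec_eq_sum[symmetric])
      finally show ?case using f by metis
    qed
  qed
qed

definition quad_root :: "real \<Rightarrow> real" where
  "quad_root S = (sqrt (S\<^sup>2 + 4) - S) / 2"

lemma quad_root_0 [simp]: "quad_root 0 = 1"
  by (simp add: quad_root_def)

lemma quad_root_pos: "0 < quad_root S"
proof -
  have "\<bar>S\<bar> < sqrt (S\<^sup>2 + 4)"
    using real_sqrt_less_mono[of "S\<^sup>2" "S\<^sup>2 + 4"] by simp
  then show ?thesis by (simp add: quad_root_def)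
qed

lemma quad_root_eq: "(S + quad_root S) * quad_root S = 1"
proof -
  have "(sqrt (S\<^sup>2 + 4))\<^sup>2 = S\<^sup>2 + 4" by simp
  then show ?thesis
    by (simp add: quad_root_def field_simps power2_eq_square)
qed

lemma quad_root_unique:
  assumes "0 < x" "(S + x) * x = 1"
  shows "x = quad_root S"
proof -
  have "0 < S + x"
    using assms zero_less_mult_pos2[of "S + x" x] by simp
  have "sqrt (S\<^sup>2 + 4) = 2 * x + S"
  proof (rule real_sqrt_unique)
    show "(2 * x + S)\<^sup>2 = S\<^sup>2 + 4"
      using assms(2) by (simp add: algebra_simps power2_eq_square)
    show "0 \<le> 2 * x + S"
      using \<open>0 < S + x\<close> \<open>0 < x\<close> by linarith
  qed
  then show ?thesis by (simp add: quad_root_def)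
qed

lemma quad_root_less_1:
  assumes "0 < S"
  shows "quad_root S < 1"
proof (rule ccontr)
  assume "\<not> quad_root S < 1"
  then have "(S + quad_root S) * 1 \<le> (S + quad_root S) * quad_root S"
    using assms quad_root_pos[of S] by (intro mult_left_mono) auto
  then show False
    using assms quad_root_eq[of S] \<open>\<not> quad_root S < 1\<close> by simp
qed

lemma quad_root_step_bound:
  assumes "1 \<le> s" "0 \<le> x"
  shows "\<bar>1 / (s + x) - quad_root S\<bar> \<le> quad_root S * (\<bar>x - quad_root S\<bar> + \<bar>s - S\<bar>)"
proof -
  define r where "r = quad_root S"
  have "0 < r" "(S + r) * r = 1"
    using quad_root_pos quad_root_eq by (simp_all add: r_def)
  have "1 \<le> s + x" using assms by simp
  have "1 / (s + x) - r = r * ((S - s) + (r - x)) / (s + x)"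
    using \<open>(S + r) * r = 1\<close> \<open>1 \<le> s + x\<close> by (simp add: field_simps)
  also have "\<bar>\<dots>\<bar> = \<bar>r * ((S - s) + (r - x))\<bar> / (s + x)"
    using \<open>1 \<le> s + x\<close> by simp
  also have "\<dots> \<le> \<bar>r * ((S - s) + (r - x))\<bar> / 1"
    using \<open>1 \<le> s + x\<close> by (intro frac_le) auto
  also have "\<dots> \<le> r * (\<bar>x - r\<bar> + \<bar>s - S\<bar>)"
    using \<open>0 < r\<close> by (simp add: abs_mult mult_left_mono)
  finally show ?thesis by (simp add: r_def)
qed

lemma tendsto_quad_root_recursion:
  fixes s x :: "nat \<Rightarrow> real"
  assumes "s \<longlonglongrightarrow> S" and s_ge_1: "\<And>n. 1 \<le> s n" and x_nonneg: "\<And>n. 0 \<le> x n"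
    and x_rec: "\<And>n. x (Suc n) = 1 / (s n + x n)"
  shows "x \<longlonglongrightarrow> quad_root S"
proof -
  define r where "r = quad_root S"
  have "1 \<le> S"
    by (rule LIMSEQ_le_const[OF \<open>s \<longlonglongrightarrow> S\<close>]) (use s_ge_1 in auto)
  then have "0 < r" "r < 1"
    using quad_root_pos quad_root_less_1 by (simp_all add: r_def)
  have step: "\<bar>x (Suc n) - r\<bar> \<le> r * \<bar>x n - r\<bar> + r * \<bar>s n - S\<bar>" for n
    using quad_root_step_bound[OF s_ge_1 x_nonneg, of n n S] by (simp add: x_rec r_def algebra_simps)
  have error_lim: "(\<lambda>n. r * \<bar>s n - S\<bar>) \<longlonglongrightarrow> 0"
    using \<open>s \<longlonglongrightarrow> S\<close> by (intro tendsto_mult_right_zero) (simp add: tendsto_rabs_zero_iff LIM_zero_iff)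
  have "(\<lambda>n. \<bar>x n - r\<bar>) \<longlonglongrightarrow> 0"
    by (rule LIMSEQ_zero_perturbed_contraction[OF _ _ \<open>r < 1\<close> step error_lim])
      (use \<open>0 < r\<close> in simp_all)
  then show ?thesis
    by (simp add: tendsto_rabs_zero_iff LIM_zero_iff r_def)
qed

lemma sum_lessThan_add_eq_head_add_sum:
  fixes m :: "nat \<Rightarrow> 'a::comm_monoid_add"
  shows "(\<Sum>k<n. m k) + m n = m 0 + (\<Sum>k=1..n. m k)"
proof -
  have "(\<Sum>k<n. m k) + m n = (\<Sum>k\<le>n. m k)"
    by (simp add: lessThan_Suc_atMost[symmetric] add.commute)
  also have "\<dots> = m 0 + (\<Sum>k=1..n. m k)"
    unfolding atMost_atLeast0 by (subst sum.atLeast_Suc_atMost) auto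
  finally show ?thesis .
qed

lemma mseq_spec_iff_quad_root_rec:
  fixes m :: "nat \<Rightarrow> real"
  shows "(m 0 = 1 \<and> (\<forall>n. 0 < m n) \<and> (\<forall>n\<ge>1. (1 + (\<Sum>k=1..n. m k)) * m n = 1))
    \<longleftrightarrow> (\<forall>n. m n = quad_root (\<Sum>k<n. m k))"
proof
  assume spec: "m 0 = 1 \<and> (\<forall>n. 0 < m n) \<and> (\<forall>n\<ge>1. (1 + (\<Sum>k=1..n. m k)) * m n = 1)"
  have "((\<Sum>k<n. m k) + m n) * m n = 1" for n
    using spec sum_lessThan_add_eq_head_add_sum[of m n] by (cases "n = 0") simp_all
  moreover have "0 < m n" for n
    using spec by blast
  ultimately show "\<forall>n. m n = quad_root (\<Sum>k<n. m k)"
    by (blast intro: quad_root_unique)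
next
  assume rec: "\<forall>n. m n = quad_root (\<Sum>k<n. m k)"
  have m_eq: "m n = quad_root (\<Sum>k<n. m k)" for n
    using rec by blast
  have "m 0 = 1"
    using m_eq[of 0] by simp
  moreover have "0 < m n" for n
    by (subst m_eq) (rule quad_root_pos)
  moreover have "(1 + (\<Sum>k=1..n. m k)) * m n = 1" for n
  proof -
    have "(1 + (\<Sum>k=1..n. m k)) * m n = ((\<Sum>k<n. m k) + m n) * m n"
      using sum_lessThan_add_eq_head_add_sum[of m n] \<open>m 0 = 1\<close> by simp
    also have "\<dots> = 1"
      using quad_root_eq[of "\<Sum>k<n. m k"] by (simp flip: m_eq)
    finally show ?thesis .
  qed
  ultimately show "m 0 = 1 \<and> (\<forall>n. 0 < m n) \<and> (\<forall>n\<ge>1. (1 + (\<Sum>k=1..n. m k)) * m n = 1)"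
    by blast
qed

lemma mseq_def_quad_root: "mseq = (THE m. \<forall>n. m n = quad_root (\<Sum>k<n. m k))"
  unfolding mseq_def mseq_spec_iff_quad_root_rec ..

lemma mseq_quad_root: "mseq n = quad_root (\<Sum>k<n. mseq k)"
  unfolding mseq_def_quad_root by (rule theI'[OF ex1_partial_sum_recursion, THEN spec])

lemma mseq_0: "mseq 0 = 1"
  by (subst mseq_quad_root) simp

definition normalized_nonneg :: "(nat \<Rightarrow> real) \<Rightarrow> bool" where
  "normalized_nonneg c \<longleftrightarrow> c 0 = 1 \<and> (\<forall>j. 0 \<le> c j)"

lemma normalized_nonneg_sum_ge_1:
  assumes "normalized_nonneg c" "0 < k"
  shows "1 \<le> (\<Sum>j<k. c j)"
  using member_le_sum[of 0 "{..<k}" c] assms by (auto simp: normalized_nonneg_def)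

lemma T_map_eq: "T_map c k = 1 / ((\<Sum>j<k. c j) + c k)"
  by (simp add: T_map_def lessThan_Suc_atMost[symmetric])

lemma normalized_nonneg_T_map:
  assumes "normalized_nonneg c"
  shows "normalized_nonneg (T_map c)"
proof -
  have "0 \<le> (\<Sum>k\<le>j. c k)" for j
    using normalized_nonneg_sum_ge_1[OF assms, of "Suc j"] unfolding lessThan_Suc_atMost by linarith
  then show ?thesis
    using assms by (auto simp: normalized_nonneg_def T_map_def)
qed

lemma normalized_nonneg_funpow_T_map:
  "normalized_nonneg c \<Longrightarrow> normalized_nonneg ((T_map ^^ n) c)"
  by (induction n) (simp_all add: normalized_nonneg_T_map)

lemma normalized_hausdorff_moment_seq_imp_normalized_nonneg:
  assumes "normalized_hausdorff_moment_seq a"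
  shows "normalized_nonneg a"
proof -
  obtain \<nu> :: "real measure" where "prob_space \<nu>" and "measure \<nu> {0..1} = 1"
    and moments: "\<And>n. a n = (\<integral>t. t ^ n \<partial>\<nu>)"
    using assms unfolding normalized_hausdorff_moment_seq_def by blast
  interpret prob_space \<nu> by fact
  have "AE t in \<nu>. t \<in> {0..1}"
    using \<open>measure \<nu> {0..1} = 1\<close> by (intro AE_prob_1) simp
  then have "AE t in \<nu>. 0 \<le> t ^ j" for j
    by eventually_elim simp
  then show ?thesis
    by (simp add: normalized_nonneg_def moments prob_space integral_nonneg_AE)
qed

lemma T_map_iterates_tendsto_mseq:
  assumes "normalized_nonneg c"
  shows "(\<lambda>n. (T_map ^^ n) c k) \<longlonglongrightarrow> mseq k"
proof (induction k rule: less_induct)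
  case (less k)
  define b where "b n = (T_map ^^ n) c" for n
  have b: "normalized_nonneg (b n)" for n
    using normalized_nonneg_funpow_T_map[OF assms] by (simp add: b_def)
  show ?case
  proof (cases "k = 0")
    case True
    then show ?thesis
      using b by (simp add: b_def[symmetric] normalized_nonneg_def mseq_0)
  next
    case False
    have "(\<lambda>n. b n k) \<longlonglongrightarrow> quad_root (\<Sum>j<k. mseq j)"
    proof (rule tendsto_quad_root_recursion)
      show "(\<lambda>n. \<Sum>j<k. b n j) \<longlonglongrightarrow> (\<Sum>j<k. mseq j)"
        using less.IH by (intro tendsto_sum) (simp add: b_def)
      show "1 \<le> (\<Sum>j<k. b n j)" for n
        using normalized_nonneg_sum_ge_1[OF b] False by simp
      show "0 \<le> b n k" for n
        using b by (simp add: normalized_nonneg_def)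
      show "b (Suc n) k = 1 / ((\<Sum>j<k. b n j) + b n k)" for n
        by (simp add: b_def T_map_eq)
    qed
    then show ?thesis
      by (simp add: b_def mseq_quad_root[of k, symmetric])
  qed
qed

theorem theorem2p3:
  fixes a :: "nat \<Rightarrow> real"
  assumes "normalized_hausdorff_moment_seq a"
  shows "\<forall>k. (\<lambda>n. (T_map ^^ n) a k) \<longlonglongrightarrow> mseq k"
  using T_map_iterates_tendsto_mseq normalized_hausdorff_moment_seq_imp_normalized_nonneg[OF assms]
  by simp

end
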